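(* Let $m\ge 1$ and $\epsilon>0$. Suppose $p_1,\dots,p_m$ and $q_1,\dots,q_m$ are unknown probability distributions on $\{0,1\}$, accessible in the query model: for any index $i$ one may request independent samples from $p_i$ or from $q_i$. There is a randomized algorithm that outputs "Yes" with probability at least $2/3$ if $p_i=q_i$ for all $1\le i\le m$, outputs "No" with probability at least $2/3$ if $\frac{1}{m}\sum_{i=1}^m\|p_i-q_i\|_2^2>\epsilon^2$, and uses in total $O\!\left(\frac{(1+\log m)^4}{\epsilon^2}\right)$ samples.
   Context: $\|p-q\|_2$ denotes the Euclidean norm of the difference of the probability vectors $p=(p(0),p(1))$ and $q=(q(0),q(1))$. *)

theory Defs
  imports "HOL-Probability.Probability"
begin

text \<open>Randomized adaptive algorithms in the query model, as finite decision trees.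
  A node either outputs an answer (True = Yes, False = No), flips a fair coin
  (internal randomness), or requests one fresh independent sample from p_i
  (flag True) or from q_i (flag False) and continues depending on the bit seen.
  Distributions on {0,1} are represented as bool pmfs (False = 0, True = 1).\<close>

datatype alg = Done bool | Coin "bool \<Rightarrow> alg" | Query nat bool "bool \<Rightarrow> alg"

primrec run :: "(nat \<Rightarrow> bool pmf) \<Rightarrow> (nat \<Rightarrow> bool pmf) \<Rightarrow> alg \<Rightarrow> bool pmf" where
  "run P Q (Done b) = return_pmf b"
| "run P Q (Coin f) = bind_pmf (bernoulli_pmf (1/2)) (\<lambda>c. run P Q (f c))"
| "run P Q (Query i s f) = bind_pmf (if s then P i else Q i) (\<lambda>x. run P Q (f x))"

primrec num_samples :: "alg \<Rightarrow> nat" where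
  "num_samples (Done b) = 0"
| "num_samples (Coin f) = max (num_samples (f True)) (num_samples (f False))"
| "num_samples (Query i s f) = 1 + max (num_samples (f True)) (num_samples (f False))"

definition l2sq :: "bool pmf \<Rightarrow> bool pmf \<Rightarrow> real" where
  "l2sq p q = (\<Sum>x\<in>(UNIV::bool set). (pmf p x - pmf q x)^2)"

end

theory Submission
  imports Defs
begin

text \<open>For a single index \<open>i\<close>, drawing \<open>n\<close> samples from each of \<open>p\<^sub>i\<close>, \<open>q\<^sub>i\<close> and thresholding the
  squared empirical difference of the frequencies of \<open>1\<close> at \<open>d / 4\<close> distinguishes a zero gap from
  a squared gap \<open>\<ge> d\<close> with error \<open>O(1 / (n d))\<close>, by Chebyshev's inequality. If the average
  squared gap exceeds \<open>a\<close>, a dyadic pigeonhole argument yields a scale \<open>d = m a / 2^k\<close>,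
  \<open>k \<le> L = O(log m)\<close>, such that the number \<open>G\<close> of indices with squared gap \<open>\<ge> d\<close> satisfies
  \<open>G min(1, d) \<ge> m a / (4 (L + 1))\<close>. For every scale the tester runs, about
  \<open>(L + 1) min(1, d) / a\<close> times, an \<open>O(log m)\<close>-fold amplified gap test on a random index
  and answers No if any of them fires. At the heavy scale some run fires with probability
  \<open>\<ge> 2/3\<close>; if \<open>p = q\<close>, a union bound over all runs keeps the probability of No below \<open>1/3\<close>.
  Each scale costs \<open>O((L + 1) r\<^sup>2 / a)\<close> samples with \<open>r = O(log m)\<close> rounds of amplification,
  hence \<open>O(log\<^sup>4 m / a)\<close> in total; since \<open>\<parallel>p\<^sub>i - q\<^sub>i\<parallel>\<^sub>2\<^sup>2\<close> is twice the squared gap,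
  the theorem follows with \<open>a = \<epsilon>\<^sup>2 / 2\<close>.\<close>

section \<open>Query trees and their expectations\<close>

text \<open>Query algorithms with results of arbitrary type, so that estimators compose by
  \<open>bind_qtree\<close>; \<open>expect P Q t g\<close> is the exact expectation of \<open>g\<close> at the output of \<open>t\<close>.\<close>

datatype 'a qtree = Ret 'a | Flip "bool \<Rightarrow> 'a qtree" | Draw nat bool "bool \<Rightarrow> 'a qtree"

primrec bind_qtree :: "'a qtree \<Rightarrow> ('a \<Rightarrow> 'b qtree) \<Rightarrow> 'b qtree" where
  "bind_qtree (Ret x) f = f x"
| "bind_qtree (Flip g) f = Flip (\<lambda>b. bind_qtree (g b) f)"
| "bind_qtree (Draw i s g) f = Draw i s (\<lambda>b. bind_qtree (g b) f)"

primrec cost :: "'a qtree \<Rightarrow> nat" where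
  "cost (Ret x) = 0"
| "cost (Flip f) = max (cost (f True)) (cost (f False))"
| "cost (Draw i s f) = 1 + max (cost (f True)) (cost (f False))"

primrec to_alg :: "bool qtree \<Rightarrow> alg" where
  "to_alg (Ret b) = Done b"
| "to_alg (Flip f) = Coin (\<lambda>b. to_alg (f b))"
| "to_alg (Draw i s f) = Query i s (\<lambda>b. to_alg (f b))"

definition heads :: "(nat \<Rightarrow> bool pmf) \<Rightarrow> (nat \<Rightarrow> bool pmf) \<Rightarrow> nat \<Rightarrow> bool \<Rightarrow> real" where
  "heads P Q i s = pmf (if s then P i else Q i) True"

definition gap :: "(nat \<Rightarrow> bool pmf) \<Rightarrow> (nat \<Rightarrow> bool pmf) \<Rightarrow> nat \<Rightarrow> real" where
  "gap P Q i = heads P Q i True - heads P Q i False"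

primrec expect :: "(nat \<Rightarrow> bool pmf) \<Rightarrow> (nat \<Rightarrow> bool pmf) \<Rightarrow> 'a qtree \<Rightarrow> ('a \<Rightarrow> real) \<Rightarrow> real" where
  "expect P Q (Ret x) g = g x"
| "expect P Q (Flip f) g = (expect P Q (f True) g + expect P Q (f False) g) / 2"
| "expect P Q (Draw i s f) g =
     heads P Q i s * expect P Q (f True) g + (1 - heads P Q i s) * expect P Q (f False) g"

abbreviation accept :: "(nat \<Rightarrow> bool pmf) \<Rightarrow> (nat \<Rightarrow> bool pmf) \<Rightarrow> bool qtree \<Rightarrow> real" where
  "accept P Q t \<equiv> expect P Q t of_bool"

lemma heads_nonneg: "0 \<le> heads P Q i s"
  and heads_le_1: "heads P Q i s \<le> 1"
  by (auto simp: heads_def pmf_le_1)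

lemma cost_to_alg: "num_samples (to_alg t) = cost t"
  by (induction t) auto

lemma cost_bind_le: "(\<And>x. cost (f x) \<le> B) \<Longrightarrow> cost (bind_qtree t f) \<le> cost t + B"
proof (induction t)
  case (Flip g)
  then have "cost (bind_qtree (g b) f) \<le> cost (g b) + B" for b by auto
  then show ?case by (simp add: max_def) (metis add_le_mono1 le_trans nat_le_linear)
next
  case (Draw i s g)
  then have "cost (bind_qtree (g b) f) \<le> cost (g b) + B" for b by auto
  then show ?case by (simp add: max_def) (metis add_le_mono1 le_trans nat_le_linear)
qed auto

lemma cost_bind_Ret: "cost (bind_qtree t (\<lambda>x. Ret (f x))) = cost t"
  by (induction t) auto

lemma expect_bind: "expect P Q (bind_qtree t f) g = expect P Q t (\<lambda>x. expect P Q (f x) g)"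
  by (induction t) auto

lemma expect_add: "expect P Q t (\<lambda>x. g x + h x) = expect P Q t g + expect P Q t h"
  by (induction t) (auto simp: algebra_simps add_divide_distrib)

lemma expect_cmult: "expect P Q t (\<lambda>x. c * g x) = c * expect P Q t g"
  by (induction t) (auto simp: algebra_simps)

lemma expect_const: "expect P Q t (\<lambda>x. c) = c"
  by (induction t) (auto simp: algebra_simps)

lemma expect_diff: "expect P Q t (\<lambda>x. g x - h x) = expect P Q t g - expect P Q t h"
  using expect_add[of P Q t g "\<lambda>x. -1 * h x"] expect_cmult[of P Q t "-1" h] by simp

lemma expect_mono: "(\<And>x. g x \<le> h x) \<Longrightarrow> expect P Q t g \<le> expect P Q t h"
proof (induction t)
  case (Draw i s f)
  then show ?case
    using heads_nonneg[of P Q i s] heads_le_1[of P Q i s]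
    by (simp add: add_mono mult_left_mono)
qed (auto simp: add_mono divide_right_mono)

lemma accept_nonneg: "0 \<le> accept P Q t"
  using expect_mono[of "\<lambda>_. 0" of_bool P Q t] by (simp add: expect_const)

lemma accept_le_1: "accept P Q t \<le> 1"
  using expect_mono[of of_bool "\<lambda>_. 1" P Q t] by (simp add: expect_const)

lemma abs_gap_le_1: "\<bar>gap P Q i\<bar> \<le> 1"
  using heads_nonneg[of P Q i True] heads_le_1[of P Q i True]
    heads_nonneg[of P Q i False] heads_le_1[of P Q i False]
  unfolding gap_def abs_le_iff by linarith

lemma expect_bool_pmf:
  "measure_pmf.expectation (p :: bool pmf) f = f True * pmf p True + f False * (1 - pmf p True)"
proof -
  have "p = bernoulli_pmf (pmf p True)"
  proof (rule pmf_eqI)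
    fix b :: bool show "pmf p b = pmf (bernoulli_pmf (pmf p True)) b"
      by (cases b) (auto simp: pmf_False_conv_True pmf_le_1)
  qed
  then show ?thesis
    by (metis integral_bernoulli_pmf pmf_le_1 pmf_nonneg)
qed

lemma pmf_run_to_alg: "pmf (run P Q (to_alg t)) True = accept P Q t"
  by (induction t) (auto simp: pmf_bind expect_bool_pmf heads_def algebra_simps)

lemma chebyshev_expect:
  assumes "s > 0" and "\<And>D. A D \<Longrightarrow> s \<le> (D - c)^2"
  shows "expect P Q t (\<lambda>D. of_bool (A D)) \<le> expect P Q t (\<lambda>D. (D - c)^2) / s"
proof -
  have "expect P Q t (\<lambda>D. of_bool (A D)) \<le> expect P Q t (\<lambda>D. (1/s) * (D - c)^2)"
    by (rule expect_mono) (use assms in \<open>auto simp: field_simps\<close>)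
  also have "\<dots> = (1/s) * expect P Q t (\<lambda>D. (D - c)^2)"
    by (rule expect_cmult)
  finally show ?thesis
    by simp
qed

lemma expect_shift_square:
  "expect P Q t (\<lambda>D. (D + c)^2) = expect P Q t (\<lambda>D. D^2) + 2 * c * expect P Q t (\<lambda>D. D) + c^2"
proof -
  have "(\<lambda>D. (D + c)^2) = (\<lambda>D. (D^2 + (2 * c) * D) + c^2)"
    by (auto simp: power2_eq_square algebra_simps)
  then show ?thesis
    by (simp add: expect_add expect_cmult expect_const)
qed

definition neg_test :: "bool qtree \<Rightarrow> bool qtree" where
  "neg_test t = bind_qtree t (\<lambda>b. Ret (\<not> b))"

definition conj_test :: "bool qtree \<Rightarrow> bool qtree \<Rightarrow> bool qtree" where
  "conj_test s t = bind_qtree s (\<lambda>b. if b then t else Ret False)"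

primrec all_tests :: "nat \<Rightarrow> (nat \<Rightarrow> bool qtree) \<Rightarrow> bool qtree" where
  "all_tests 0 f = Ret True"
| "all_tests (Suc n) f = conj_test (f n) (all_tests n f)"

abbreviation repeat_test :: "nat \<Rightarrow> bool qtree \<Rightarrow> bool qtree" where
  "repeat_test r t \<equiv> all_tests r (\<lambda>_. t)"

lemma accept_neg_test: "accept P Q (neg_test t) = 1 - accept P Q t"
proof -
  have "(\<lambda>b. of_bool (\<not> b) :: real) = (\<lambda>b. 1 - of_bool b)"
    by auto
  then show ?thesis
    by (simp add: neg_test_def expect_bind expect_diff expect_const)
qed

lemma reject_power_bounds: "0 \<le> (1 - accept P Q t) ^ n \<and> (1 - accept P Q t) ^ n \<le> 1"
  using accept_nonneg[of P Q t] accept_le_1[of P Q t] by (auto intro: power_le_one)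

lemma cost_neg_test: "cost (neg_test t) = cost t"
  by (simp add: neg_test_def cost_bind_Ret)

lemma accept_conj_test: "accept P Q (conj_test s t) = accept P Q s * accept P Q t"
proof -
  have "(\<lambda>b. accept P Q (if b then t else Ret False)) = (\<lambda>b. accept P Q t * of_bool b)"
    by auto
  then show ?thesis
    by (simp add: conj_test_def expect_bind expect_cmult)
qed

lemma cost_conj_test: "cost (conj_test s t) \<le> cost s + cost t"
  unfolding conj_test_def by (rule cost_bind_le) auto

lemma accept_all_tests: "accept P Q (all_tests n f) = (\<Prod>k<n. accept P Q (f k))"
  by (induction n) (auto simp: accept_conj_test)

lemma cost_all_tests: "cost (all_tests n f) \<le> (\<Sum>k<n. cost (f k))"
proof (induction n)
  case (Suc n)
  then show ?case
    using cost_conj_test[of "f n" "all_tests n f"] by simp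
qed simp

lemma accept_repeat_test: "accept P Q (repeat_test r t) = accept P Q t ^ r"
  by (simp add: accept_all_tests)

lemma cost_repeat_test: "cost (repeat_test r t) \<le> r * cost t"
  using cost_all_tests[of r "\<lambda>_. t"] by simp

section \<open>Testing a single index\<close>

primrec diff_count :: "nat \<Rightarrow> nat \<Rightarrow> real qtree" where
  "diff_count i 0 = Ret 0"
| "diff_count i (Suc n) = Draw i True (\<lambda>b. Draw i False (\<lambda>c.
      bind_qtree (diff_count i n) (\<lambda>D. Ret (D + (of_bool b - of_bool c)))))"

lemma cost_diff_count: "cost (diff_count i n) = 2 * n"
  by (induction n) (auto simp: cost_bind_Ret)

lemma diff_count_variance:
  "expect P Q (diff_count i n) (\<lambda>D. (D - n * gap P Q i)^2) \<le> n / 2"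
proof -
  define p q where "p = heads P Q i True" and "q = heads P Q i False"
  have moments: "expect P Q (diff_count i k) (\<lambda>D. D) = k * (p - q) \<and>
      expect P Q (diff_count i k) (\<lambda>D. D^2) = k * (p * (1 - p) + q * (1 - q)) + (k * (p - q))^2" for k
  proof (induction k)
    case (Suc k)
    let ?E = "expect P Q (diff_count i k)"
    have shift: "?E (\<lambda>D. D + c) = ?E (\<lambda>D. D) + c" for c
      using expect_add[of P Q "diff_count i k" "\<lambda>D. D" "\<lambda>_. c"] by (simp add: expect_const)
    have step: "expect P Q (diff_count i (Suc k)) g =
       p * (q * ?E g + (1 - q) * ?E (\<lambda>D. g (D + 1))) + (1 - p) * (q * ?E (\<lambda>D. g (D + -1)) + (1 - q) * ?E g)"
      for g
      by (simp add: expect_bind p_def q_def)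
    show ?case
      unfolding step shift expect_shift_square Suc[THEN conjunct1] Suc[THEN conjunct2]
      by (simp add: algebra_simps power2_eq_square)
  qed simp
  have "x * (1 - x) \<le> 1/4" for x :: real
    using zero_le_power2[of "x - 1/2"] by (simp add: power2_eq_square algebra_simps)
  from this[of p] this[of q] have "n * (p * (1 - p) + q * (1 - q)) \<le> n * (1/2)"
    by (intro mult_left_mono) auto
  moreover have "expect P Q (diff_count i n) (\<lambda>D. (D + - (n * (p - q)))^2) = n * (p * (1 - p) + q * (1 - q))"
    by (simp only: expect_shift_square moments) (simp add: power2_eq_square algebra_simps)
  ultimately show ?thesis
    by (simp add: gap_def p_def q_def)
qed

lemma diff_count_deviation:
  assumes "n > 0" "d > 0" and "\<And>D. A D \<Longrightarrow> real n ^ 2 * d / 4 \<le> (D - n * gap P Q i)^2"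
  shows "expect P Q (diff_count i n) (\<lambda>D. of_bool (A D)) \<le> 2 / (n * d)"
proof -
  have "expect P Q (diff_count i n) (\<lambda>D. of_bool (A D))
      \<le> expect P Q (diff_count i n) (\<lambda>D. (D - n * gap P Q i)^2) / (real n ^ 2 * d / 4)"
    using assms by (intro chebyshev_expect) auto
  also have "\<dots> \<le> (n / 2) / (real n ^ 2 * d / 4)"
    using assms by (intro divide_right_mono diff_count_variance) auto
  also have "\<dots> = 2 / (n * d)"
    using assms by (simp add: power2_eq_square field_simps)
  finally show ?thesis .
qed

definition gap_test :: "nat \<Rightarrow> nat \<Rightarrow> real \<Rightarrow> bool qtree" where
  "gap_test i n d = bind_qtree (diff_count i n) (\<lambda>D. Ret (real n ^ 2 * d \<le> 4 * D^2))"

lemma cost_gap_test: "cost (gap_test i n d) = 2 * n"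
  by (simp add: gap_test_def cost_bind_Ret cost_diff_count)

lemma accept_gap_test_equal:
  assumes "P i = Q i" "n > 0" "d > 0"
  shows "accept P Q (gap_test i n d) \<le> 2 / (n * d)"
proof -
  have eq: "gap P Q i = 0"
    using assms by (simp add: gap_def heads_def)
  have "accept P Q (gap_test i n d)
      = expect P Q (diff_count i n) (\<lambda>D. of_bool (real n ^ 2 * d \<le> 4 * D^2))"
    by (simp add: gap_test_def expect_bind)
  also have "\<dots> \<le> 2 / (n * d)"
    by (rule diff_count_deviation) (use assms eq in auto)
  finally show ?thesis .
qed

lemma half_gap_le_distance:
  fixes D y T :: real
  assumes "4 * D^2 < T" "T \<le> y^2"
  shows "T / 4 \<le> (D - y)^2"
proof -
  have "(2 * D)^2 < y^2"
    using assms by (simp add: power_mult_distrib)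
  then have "\<bar>2 * D\<bar> < \<bar>y\<bar>"
    by (metis abs_ge_zero power2_abs power_less_imp_less_base)
  then have "\<bar>y\<bar> / 2 \<le> \<bar>D - y\<bar>"
    by linarith
  then have "(\<bar>y\<bar> / 2)^2 \<le> \<bar>D - y\<bar>^2"
    by (intro power_mono) auto
  then show ?thesis
    using assms by (simp add: power_divide)
qed

lemma accept_gap_test_far:
  assumes "d \<le> (gap P Q i)^2" "n > 0" "d > 0"
  shows "accept P Q (gap_test i n d) \<ge> 1 - 2 / (n * d)"
proof -
  have "accept P Q (neg_test (gap_test i n d))
      = expect P Q (diff_count i n) (\<lambda>D. of_bool (\<not> real n ^ 2 * d \<le> 4 * D^2))"
    by (simp add: neg_test_def gap_test_def expect_bind)
  also have "\<dots> \<le> 2 / (n * d)"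
  proof (rule diff_count_deviation)
    fix D assume "\<not> real n ^ 2 * d \<le> 4 * D^2"
    moreover have "real n ^ 2 * d \<le> (n * gap P Q i)^2"
      using assms by (simp add: power_mult_distrib)
    ultimately show "real n ^ 2 * d / 4 \<le> (D - n * gap P Q i)^2"
      by (intro half_gap_le_distance) auto
  qed (use assms in auto)
  finally show ?thesis
    by (simp add: accept_neg_test)
qed

lemma accept_repeat_gap_test_equal:
  assumes "P i = Q i" "d > 0" "8 * real r \<le> real n * d"
  shows "accept P Q (repeat_test r (gap_test i n d)) \<le> (1/4) ^ r"
proof (cases "r = 0")
  case False
  then have "n > 0"
    using assms by (cases n) auto
  moreover have "2 / (n * d) \<le> 1/4"
    using assms False \<open>n > 0\<close> by (simp add: field_simps)
  ultimately have "accept P Q (gap_test i n d) \<le> 1/4"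
    using accept_gap_test_equal[of P i Q n d] assms by linarith
  then show ?thesis
    by (simp add: accept_repeat_test power_mono accept_nonneg)
qed simp

lemma accept_repeat_gap_test_far:
  assumes "d \<le> (gap P Q i)^2" "d > 0" "r \<ge> 1" "8 * real r \<le> real n * d"
  shows "accept P Q (repeat_test r (gap_test i n d)) \<ge> 3/4"
proof -
  have "n > 0"
    using assms by (cases n) auto
  have eps: "2 / (n * d) \<le> 1 / (4 * r)" "1 / (4 * real r) \<le> 1"
    using assms \<open>n > 0\<close> by (simp_all add: field_simps)
  have "1 + real r * (- 1 / (4 * r)) \<le> (1 + (- 1 / (4 * r))) ^ r"
    using eps by (intro Bernoulli_inequality) auto
  also have "\<dots> \<le> accept P Q (gap_test i n d) ^ r"
    using accept_gap_test_far[OF assms(1) \<open>n > 0\<close> assms(2)] eps by (intro power_mono) auto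
  finally show ?thesis
    using assms by (simp add: accept_repeat_test)
qed

primrec random_bits :: "nat \<Rightarrow> nat qtree" where
  "random_bits 0 = Ret 0"
| "random_bits (Suc k) = Flip (\<lambda>b. bind_qtree (random_bits k) (\<lambda>x. Ret (2 * x + of_bool b)))"

lemma expect_random_bits: "expect P Q (random_bits k) h = (\<Sum>x<2^k. h x) / 2^k"
proof (induction k arbitrary: h)
  case (Suc k)
  have "(\<Sum>x<2^Suc k. h x) = (\<Sum>x<2 * 2^k. if even x then h x else h x)"
    by simp
  also have "\<dots> = (\<Sum>x<2^k. h (2 * x)) + (\<Sum>x<2^k. h (2 * x + 1))"
    by (rule sum_split_even_odd)
  finally show ?case
    by (simp add: expect_bind Suc field_simps)
qed simp

text \<open>Fair coins cannot sample uniformly from \<open>{1..m}\<close> in bounded depth; \<open>k\<close> random bits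
  reduced modulo \<open>m\<close> are uniform up to a factor \<open>2\<close> once \<open>m \<le> 2^k\<close>, which suffices.\<close>

definition random_index :: "nat \<Rightarrow> nat \<Rightarrow> nat qtree" where
  "random_index m k = bind_qtree (random_bits k) (\<lambda>x. Ret (x mod m + 1))"

lemma cost_random_index: "cost (random_index m k) = 0"
proof -
  have "cost (random_bits k) = 0"
    by (induction k) (auto simp: cost_bind_Ret)
  then show ?thesis
    by (simp add: random_index_def cost_bind_Ret)
qed

lemma expect_random_index: "expect P Q (random_index m k) h = (\<Sum>x<2^k. h (x mod m + 1)) / 2^k"
  by (simp add: random_index_def expect_bind expect_random_bits)

lemma sum_mod_ge:
  fixes h :: "nat \<Rightarrow> real"
  assumes "\<And>x. 0 \<le> h x"
  shows "real (N div m) * (\<Sum>i=1..m. h i) \<le> (\<Sum>x<N. h (x mod m + 1))"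
proof -
  have "(\<Sum>x<N div m * m. h (x mod m + 1)) = (\<Sum>l<N div m. \<Sum>j<m. h ((j + l * m) mod m + 1))"
    by (rule sum_mult_product)
  also have "\<dots> = real (N div m) * (\<Sum>i=1..m. h i)"
    by (simp add: sum.atLeast1_atMost_eq)
  finally have "real (N div m) * (\<Sum>i=1..m. h i) = (\<Sum>x<N div m * m. h (x mod m + 1))" ..
  also have "\<dots> \<le> (\<Sum>x<N. h (x mod m + 1))"
    by (rule sum_mono2) (auto simp: assms intro: order.strict_trans2[OF _ div_times_less_eq_dividend])
  finally show ?thesis .
qed

lemma expect_random_index_ge:
  assumes "1 \<le> m" "m \<le> 2^k" and "\<And>x. 0 \<le> h x"
  shows "(\<Sum>i=1..m. h i) / (2 * real m) \<le> expect P Q (random_index m k) h"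
proof -
  let ?N = "2^k :: nat"
  have "?N \<le> 2 * (?N div m) * m"
    using assms by (metis One_nat_def Suc_1 div_greater_zero_iff div_less_iff_less_mult
      lessI less_or_eq_imp_le n_less_m_mult_n zero_less_one order.strict_trans2)
  then have N: "real ?N \<le> 2 * real (?N div m) * m"
    by (metis of_nat_le_iff of_nat_mult of_nat_numeral)
  have "(\<Sum>i=1..m. h i) / (2 * real m) \<le> real (?N div m) * (\<Sum>i=1..m. h i) / ?N"
    using mult_left_mono[OF N sum_nonneg[of "{1..m}" h]] assms by (simp add: field_simps)
  also have "\<dots> \<le> (\<Sum>x<?N. h (x mod m + 1)) / ?N"
    using assms by (intro divide_right_mono sum_mod_ge) auto
  finally show ?thesis
    by (simp add: expect_random_index)
qed

lemma expect_random_index_le: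
  assumes "1 \<le> m" and "\<And>i. i \<in> {1..m} \<Longrightarrow> h i \<le> B"
  shows "expect P Q (random_index m k) h \<le> B"
proof -
  have "(\<Sum>x<(2::nat)^k. h (x mod m + 1)) \<le> (\<Sum>x<(2::nat)^k. B)"
    by (rule sum_mono) (use assms in \<open>auto intro!: assms(2) Suc_leI mod_less_divisor\<close>)
  then show ?thesis
    by (simp add: expect_random_index field_simps)
qed

definition level_test :: "nat \<Rightarrow> nat \<Rightarrow> nat \<Rightarrow> nat \<Rightarrow> real \<Rightarrow> bool qtree" where
  "level_test r n m k d = bind_qtree (random_index m k) (\<lambda>i. repeat_test r (gap_test i n d))"

lemma cost_level_test: "cost (level_test r n m k d) \<le> 2 * r * n"
proof -
  have "cost (repeat_test r (gap_test i n d)) \<le> 2 * r * n" for i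
    using cost_repeat_test[of r "gap_test i n d"] by (simp add: cost_gap_test)
  then show ?thesis
    using cost_bind_le[of "\<lambda>i. repeat_test r (gap_test i n d)" "2 * r * n" "random_index m k"]
    by (simp add: level_test_def cost_random_index)
qed

lemma accept_level_test_equal:
  assumes "\<forall>i\<in>{1..m}. P i = Q i" "1 \<le> m" "d > 0" "8 * real r \<le> real n * d"
  shows "accept P Q (level_test r n m k d) \<le> (1/4) ^ r"
  unfolding level_test_def expect_bind using assms
  by (intro expect_random_index_le accept_repeat_gap_test_equal) auto

lemma accept_level_test_far:
  assumes "1 \<le> m" "m \<le> 2^k" "d > 0" "r \<ge> 1" "8 * real r \<le> real n * d"
  shows "3/8 * card {i\<in>{1..m}. d \<le> (gap P Q i)^2} / m
    \<le> accept P Q (level_test r n m k d)"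
proof -
  let ?G = "{i\<in>{1..m}. d \<le> (gap P Q i)^2}"
  let ?a = "\<lambda>i. accept P Q (repeat_test r (gap_test i n d))"
  have "3/4 * card ?G = (\<Sum>i\<in>?G. 3/4)"
    by simp
  also have "\<dots> \<le> (\<Sum>i\<in>?G. ?a i)"
    using assms by (intro sum_mono accept_repeat_gap_test_far) auto
  also have "\<dots> \<le> (\<Sum>i=1..m. ?a i)"
    by (rule sum_mono2) (auto intro: accept_nonneg)
  finally have "3/8 * card ?G / m \<le> (\<Sum>i=1..m. ?a i) / (2 * real m)"
    using assms by (simp add: field_simps)
  also have "\<dots> \<le> accept P Q (level_test r n m k d)"
    unfolding level_test_def expect_bind using assms by (intro expect_random_index_ge accept_nonneg)
  finally show ?thesis .
qed

lemma one_minus_sum_le_prod: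
  fixes x :: "'a \<Rightarrow> real"
  assumes "finite S" and "\<And>k. k \<in> S \<Longrightarrow> 0 \<le> x k \<and> x k \<le> 1"
  shows "1 - (\<Sum>k\<in>S. 1 - x k) \<le> (\<Prod>k\<in>S. x k)"
  using assms
proof (induction S rule: finite_induct)
  case (insert a S)
  have "x a * (1 - (\<Sum>k\<in>S. 1 - x k)) \<le> x a * (\<Prod>k\<in>S. x k)"
    using insert by (intro mult_left_mono) auto
  moreover have "0 \<le> (1 - x a) * (\<Sum>k\<in>S. 1 - x k)"
    using insert by (intro mult_nonneg_nonneg sum_nonneg) auto
  ultimately show ?case
    using insert by (simp add: algebra_simps)
qed simp

lemma prod_le_factor:
  fixes x :: "'a \<Rightarrow> real"
  assumes "finite S" "j \<in> S" and "\<And>k. k \<in> S \<Longrightarrow> 0 \<le> x k \<and> x k \<le> 1"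
  shows "(\<Prod>k\<in>S. x k) \<le> x j"
proof -
  have "(\<Prod>k\<in>S. x k) = x j * (\<Prod>k\<in>S - {j}. x k)"
    using assms by (simp add: prod.remove)
  also have "\<dots> \<le> x j * 1"
    using assms by (intro mult_left_mono prod_le_1) auto
  finally show ?thesis
    by simp
qed

lemma one_minus_power_le:
  fixes x :: real
  assumes "0 \<le> x" "x \<le> 1"
  shows "(1 - x) ^ K \<le> 1 / (1 + K * x)"
proof -
  have "(1 - x) ^ K * (1 + K * x) \<le> (1 - x) ^ K * (1 + x) ^ K"
    using assms by (intro mult_left_mono Bernoulli_inequality) auto
  also have "\<dots> = (1 - x^2) ^ K"
    by (simp add: power_mult_distrib[symmetric] power2_eq_square algebra_simps)
  also have "\<dots> \<le> 1"
    using assms by (intro power_le_one) (auto simp: power_le_one)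
  finally show ?thesis
    using assms by (simp add: field_simps add_pos_nonneg)
qed

section \<open>Dyadic levels\<close>

text \<open>If \<open>k \<ge> 1\<close> is the first scale with \<open>c / 2^k \<le> y\<close>, then \<open>y < c / 2^(k-1) = 2 c / 2^k\<close>.\<close>

lemma dyadic_cover:
  fixes c y :: real
  assumes "0 < c" "0 \<le> y" "y \<le> 1"
  shows "y \<le> c / 2^L + of_bool (c \<le> y)
           + (\<Sum>k\<in>{1..L}. of_bool (c / 2^k \<le> y) * (2 * min 1 (c / 2^k)))"
proof -
  let ?S = "\<Sum>k\<in>{1..L}. of_bool (c / 2^k \<le> y) * (2 * min 1 (c / 2^k))"
  have "0 \<le> ?S"
    using assms by (intro sum_nonneg) auto
  have "0 \<le> c / 2^L"
    using assms by simp
  consider "y < c / 2^L" | "c \<le> y" | "c / 2^L \<le> y" "\<not> c \<le> y"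
    by linarith
  then show ?thesis
  proof cases
    case 1
    then show ?thesis
      using \<open>0 \<le> ?S\<close> by (simp add: add_increasing2)
  next
    case 2
    then have "of_bool (c \<le> y) = (1::real)"
      by simp
    then show ?thesis
      using \<open>0 \<le> ?S\<close> \<open>0 \<le> c / 2^L\<close> assms by linarith
  next
    case 3
    define k where "k = (LEAST k. c / 2^k \<le> y)"
    have "k \<le> L" "c / 2^k \<le> y"
      unfolding k_def using 3 by (auto intro: Least_le LeastI)
    have "k \<noteq> 0"
      using \<open>c / 2^k \<le> y\<close> 3 by (cases k) auto
    then obtain j where j: "k = Suc j"
      using not0_implies_Suc by blast
    then have "\<not> c / 2^j \<le> y"
      unfolding k_def using not_less_Least[of j "\<lambda>k. c / 2^k \<le> y"] k_def by simp
    then have "y \<le> 2 * (c / 2^k)"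
      using j by (simp add: field_simps)
    then have "y \<le> 2 * min 1 (c / 2^k)"
      using assms by simp
    also have "\<dots> = of_bool (c / 2^k \<le> y) * (2 * min 1 (c / 2^k))"
      using \<open>c / 2^k \<le> y\<close> by simp
    also have "\<dots> \<le> ?S"
      using \<open>k \<le> L\<close> \<open>k \<noteq> 0\<close> assms by (intro member_le_sum) auto
    finally have "y \<le> ?S" .
    moreover have "0 \<le> c / 2^L + of_bool (c \<le> y)"
      using assms by simp
    ultimately show ?thesis
      by linarith
  qed
qed

lemma sum_of_bool_mult_const:
  "finite S \<Longrightarrow> (\<Sum>i\<in>S. of_bool (A i) * c) = real (card {i\<in>S. A i}) * (c :: real)"
  by (simp add: sum_of_bool_mult_eq Int_def conj_commute)

lemma sum_le_dyadic_counts: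
  fixes x :: "'i \<Rightarrow> real" and c :: real
  assumes "finite I" "0 < c" and x: "\<And>i. i \<in> I \<Longrightarrow> 0 \<le> x i \<and> x i \<le> 1"
  shows "(\<Sum>i\<in>I. x i) \<le> card I * (c / 2^L) + card {i\<in>I. c \<le> x i}
           + (\<Sum>k\<in>{1..L}. card {i\<in>I. c / 2^k \<le> x i} * (2 * min 1 (c / 2^k)))"
proof -
  have "(\<Sum>i\<in>I. x i) \<le> (\<Sum>i\<in>I. c / 2^L + of_bool (c \<le> x i)
      + (\<Sum>k\<in>{1..L}. of_bool (c / 2^k \<le> x i) * (2 * min 1 (c / 2^k))))"
    using assms by (intro sum_mono dyadic_cover) auto
  then have "(\<Sum>i\<in>I. x i) \<le> (\<Sum>i\<in>I. c / 2^L) + (\<Sum>i\<in>I. of_bool (c \<le> x i))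
      + (\<Sum>i\<in>I. \<Sum>k\<in>{1..L}. of_bool (c / 2^k \<le> x i) * (2 * min 1 (c / 2^k)))"
    by (simp only: sum.distrib)
  moreover have "(\<Sum>i\<in>I. \<Sum>k\<in>{1..L}. of_bool (c / 2^k \<le> x i) * (2 * min 1 (c / 2^k)))
      = (\<Sum>k\<in>{1..L}. card {i\<in>I. c / 2^k \<le> x i} * (2 * min 1 (c / 2^k)))"
    by (subst sum.swap) (intro sum.cong refl sum_of_bool_mult_const assms(1))
  moreover have "(\<Sum>i\<in>I. of_bool (c \<le> x i)) = real (card {i\<in>I. c \<le> x i})"
    using sum_of_bool_mult_const[OF assms(1), of "\<lambda>i. c \<le> x i" 1] by simp
  ultimately show ?thesis
    by simp
qed

text \<open>Otherwise \<open>sum_le_dyadic_counts\<close> would bound \<open>\<Sum>i. x i\<close> by \<open>m a\<close>.\<close>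

lemma heavy_dyadic_level:
  fixes x :: "nat \<Rightarrow> real"
  assumes "1 \<le> m" "0 < a" "2 * m < 2^L"
    and x: "\<And>i. i \<in> {1..m} \<Longrightarrow> 0 \<le> x i \<and> x i \<le> 1"
    and sum_x: "m * a < (\<Sum>i=1..m. x i)"
  shows "\<exists>k\<le>L. {i\<in>{1..m}. m * a / 2^k \<le> x i} \<noteq> {} \<and>
           m * a \<le> 4 * (L + 1) * card {i\<in>{1..m}. m * a / 2^k \<le> x i} * min 1 (m * a / 2^k)"
proof (rule ccontr)
  define d where "d k = m * a / 2^k" for k
  define G where "G k = real (card {i\<in>{1..m}. d k \<le> x i})" for k
  define B where "B = m * a / (4 * (L + 1))"
  assume "\<not> ?thesis"
  then have light: "G k = 0 \<or> G k * min 1 (d k) < B" if "k \<le> L" for k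
    using that unfolding G_def d_def B_def by (auto simp: field_simps)
  have "0 < m * a" "0 < B" "B \<le> m * a / 4"
    using assms by (auto simp: B_def field_simps)
  then have light': "G k * min 1 (d k) < B" if "k \<le> L" for k
    using light[OF that] by auto
  have G0: "G 0 < B"
  proof (rule ccontr)
    assume "\<not> G 0 < B"
    then have "1 \<le> G 0"
      using light[of 0] \<open>0 < B\<close> by (auto simp: G_def)
    moreover have "G 0 * min 1 (m * a) < B"
      using light'[of 0] by (simp add: d_def)
    moreover have "1 * (m * a) \<le> G 0 * (m * a)"
      using \<open>1 \<le> G 0\<close> assms by (intro mult_right_mono) auto
    ultimately show False
      using \<open>\<not> G 0 < B\<close> \<open>B \<le> m * a / 4\<close> \<open>0 < m * a\<close> by (cases "1 \<le> m * a") (auto simp: min_def)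
  qed
  have "d L \<le> a / 2"
  proof -
    have "real (2 * m) \<le> 2 ^ L"
      using assms by (metis less_imp_le of_nat_le_iff of_nat_numeral of_nat_power)
    then show ?thesis
      using assms by (simp add: d_def field_simps)
  qed
  have "(\<Sum>i=1..m. x i) \<le> m * d L + G 0 + (\<Sum>k\<in>{1..L}. G k * (2 * min 1 (d k)))"
    using sum_le_dyadic_counts[of "{1..m}" "m * a" x L] assms by (simp add: d_def G_def)
  also have "\<dots> < m * (a / 2) + B + (\<Sum>k\<in>{1..L}. 2 * B)"
    using \<open>d L \<le> a / 2\<close> G0 light' assms
    by (intro add_less_le_mono add_le_less_mono mult_left_mono sum_mono) (auto intro: less_imp_le)
  also have "\<dots> = m * (a / 2) + B * (1 + 2 * L)"
    by (simp add: algebra_simps)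
  also have "\<dots> \<le> m * (a / 2) + B * (2 * (L + 1))"
    using \<open>0 < B\<close> by (intro add_left_mono mult_left_mono) auto
  also have "\<dots> = m * a"
    by (simp add: B_def field_simps)
  finally show False
    using sum_x by simp
qed

lemma log2_le_ln:
  assumes "1 \<le> x"
  shows "log 2 x \<le> 3/2 * ln x"
proof -
  have "log 2 x = ln x / ln 2"
    by (simp add: log_def)
  also have "\<dots> \<le> ln x / (2/3)"
    using assms ln2_ge_two_thirds by (intro divide_left_mono) auto
  finally show ?thesis
    by simp
qed

lemma levels_le_ln:
  assumes "1 \<le> m" "2 ^ L \<le> 4 * m"
  shows "real L + 1 \<le> 3 * (1 + ln (real m))"
proof -
  have "(2::real) ^ L \<le> 4 * real m"
    using assms(2) by (metis of_nat_le_iff of_nat_mult of_nat_numeral of_nat_power)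
  then have "real L \<le> log 2 (4 * real m)"
    by (rule le_log_of_power) simp
  also have "\<dots> = 2 + log 2 (real m)"
    using assms log_nat_power[of 2 2 2] by (simp add: log_mult)
  also have "\<dots> \<le> 2 + 3/2 * ln (real m)"
    using assms log2_le_ln[of "real m"] by simp
  finally have "real L \<le> 2 + 3/2 * ln (real m)" .
  moreover have "0 \<le> ln (real m)"
    using assms by simp
  ultimately show ?thesis
    by (simp add: algebra_simps)
qed

lemma rounds_le_ln:
  assumes "1 \<le> m" "real L + 1 \<le> 3 * (1 + ln (real m))" "4 ^ r \<le> 84 * m * (L + 1)"
  shows "real r \<le> 4 * (1 + ln (real m))"
proof -
  have "1 + ln (real m) \<le> real m"
    using assms ln_le_minus_one[of "real m"] by simp
  then have "real m * (real L + 1) \<le> real m * (3 * real m)"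
    using assms by (intro mult_left_mono) auto
  then have "real (84 * m * (L + 1)) \<le> 252 * real m ^ 2"
    by (simp add: power2_eq_square algebra_simps)
  also have "\<dots> \<le> 4 ^ 4 * real m ^ 2"
    by (intro mult_right_mono) auto
  finally have "real (84 * m * (L + 1)) \<le> 4 ^ 4 * real m ^ 2" .
  then have "(4::real) ^ r \<le> 4 ^ 4 * real m ^ 2"
    using assms(3) by (metis of_nat_le_iff of_nat_numeral of_nat_power order.trans)
  then have "real r \<le> log 4 (4 ^ 4 * real m ^ 2)"
    by (rule le_log_of_power) simp
  also have "\<dots> = log 4 (4 ^ 4) + log 4 (real m ^ 2)"
    by (rule log_mult_pos) (use assms in auto)
  also have "\<dots> = 4 + 2 * log 4 (real m)"
    using log_pow_cancel[of "4::real" 4] by (simp add: log_nat_power)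
  also have "\<dots> = 4 + log 2 (real m)"
    using ln_realpow[of 2 2] by (simp add: log_def)
  also have "\<dots> \<le> 4 + 3/2 * ln (real m)"
    using assms log2_le_ln[of "real m"] by simp
  finally have "real r \<le> 4 + 3/2 * ln (real m)" .
  moreover have "0 \<le> ln (real m)"
    using assms by simp
  ultimately show ?thesis
    by (simp add: algebra_simps)
qed

section \<open>The tester\<close>

text \<open>The \<open>L + 1\<close> scales \<open>m a / 2^k\<close> range over \<open>[a/4, m a]\<close>; the gap tests are amplified
  \<open>r\<close>-fold so that a union bound over the at most \<open>7 m (L + 1)\<close> runs in the null case works.\<close>

locale tester_parameters =
  fixes m L r :: nat and a :: real
  assumes m_pos: "1 \<le> m" and a_pos: "0 < a" and a_lt_1: "a < 1"
    and L_lower: "2 * m < 2 ^ L" and L_upper: "2 ^ L \<le> 4 * m"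
    and r_lower: "21 * m * (L + 1) < 4 ^ r" and r_upper: "4 ^ r \<le> 84 * m * (L + 1)"
begin

definition threshold :: "nat \<Rightarrow> real" where
  "threshold k = m * a / 2^k"

text \<open>Chosen so that \<open>G * reps_bound k \<ge> 6 m\<close> at the heavy scale of \<open>heavy_dyadic_level\<close>,
  while \<open>reps k * sample_size k = O((L + 1) r / a)\<close> at every scale.\<close>

definition reps_bound :: "nat \<Rightarrow> real" where
  "reps_bound k = min (6 * m) (24 * (L + 1) * min 1 (threshold k) / a)"

definition reps :: "nat \<Rightarrow> nat" where
  "reps k = nat \<lceil>reps_bound k\<rceil>"

definition sample_size :: "nat \<Rightarrow> nat" where
  "sample_size k = nat \<lceil>8 * r / threshold k\<rceil>"

definition level :: "nat \<Rightarrow> bool qtree" where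
  "level k = level_test r (sample_size k) m L (threshold k)"

definition tester :: "bool qtree" where
  "tester = all_tests (L + 1) (\<lambda>k. repeat_test (reps k) (neg_test (level k)))"

lemma r_pos: "1 \<le> r"
  using r_lower m_pos by (cases r) auto

lemma threshold_pos: "0 < threshold k"
  using m_pos a_pos by (simp add: threshold_def)

lemma threshold_ge: "k \<le> L \<Longrightarrow> a / 4 \<le> threshold k"
proof -
  assume "k \<le> L"
  then have "(2::real) ^ k \<le> 2 ^ L"
    by (simp add: power_increasing)
  also have "\<dots> \<le> 4 * real m"
    using L_upper by (metis of_nat_le_iff of_nat_mult of_nat_numeral of_nat_power)
  finally show ?thesis
    using a_pos by (simp add: threshold_def field_simps)
qed

lemma reps_bound_nonneg: "0 \<le> reps_bound k"
  using a_pos threshold_pos[of k] by (simp add: reps_bound_def)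

lemma reps_bounds: "reps_bound k \<le> reps k" "reps k \<le> reps_bound k + 1"
  using reps_bound_nonneg[of k] by (simp_all add: reps_def)

lemma sample_size_bounds: "8 * r \<le> sample_size k * threshold k" "sample_size k \<le> 8 * r / threshold k + 1"
proof -
  have "8 * r / threshold k \<le> sample_size k"
    unfolding sample_size_def by (rule real_nat_ceiling_ge)
  then show "8 * r \<le> sample_size k * threshold k"
    using threshold_pos[of k] by (simp add: field_simps)
  show "sample_size k \<le> 8 * r / threshold k + 1"
    using threshold_pos[of k] by (simp add: sample_size_def of_int_ceiling_le_add_one)
qed

lemma accept_tester: "accept P Q tester = (\<Prod>k<L + 1. (1 - accept P Q (level k)) ^ reps k)"
  unfolding tester_def accept_all_tests accept_neg_test by simp

lemma tester_complete:
  assumes "\<forall>i\<in>{1..m}. P i = Q i"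
  shows "2/3 \<le> accept P Q tester"
proof -
  let ?\<rho> = "\<lambda>k. accept P Q (level k)"
  have "1 - (1 - ?\<rho> k) ^ reps k \<le> 7 * m * (1/4) ^ r" for k
  proof -
    have "?\<rho> k \<le> (1/4) ^ r"
      unfolding level_def using assms m_pos threshold_pos sample_size_bounds(1)
      by (intro accept_level_test_equal) auto
    moreover have "reps k \<le> 7 * real m"
      using reps_bounds(2)[of k] m_pos by (simp add: reps_bound_def)
    ultimately have "reps k * ?\<rho> k \<le> 7 * m * (1/4) ^ r"
      using accept_nonneg[of P Q "level k"] by (intro mult_mono) auto
    moreover have "1 + reps k * (- ?\<rho> k) \<le> (1 + - ?\<rho> k) ^ reps k"
      using accept_le_1[of P Q "level k"] by (intro Bernoulli_inequality) auto
    ultimately show ?thesis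
      by simp
  qed
  then have "(\<Sum>k<L + 1. 1 - (1 - ?\<rho> k) ^ reps k) \<le> (L + 1) * (7 * m * (1/4) ^ r)"
    using sum_mono[of "{..<L + 1}" "\<lambda>k. 1 - (1 - ?\<rho> k) ^ reps k" "\<lambda>_. 7 * m * (1/4) ^ r"] by simp
  also have "\<dots> \<le> 1/3"
  proof -
    have "real (21 * m * (L + 1)) < 4 ^ r"
      using r_lower by (metis of_nat_less_iff of_nat_numeral of_nat_power)
    then show ?thesis
      by (simp add: field_simps power_one_over)
  qed
  finally show ?thesis
    using one_minus_sum_le_prod[of "{..<L + 1}" "\<lambda>k. (1 - ?\<rho> k) ^ reps k"] reject_power_bounds
    by (simp add: accept_tester)
qed

lemma reps_bound_heavy:
  fixes G :: real
  assumes "1 \<le> G" "m * a \<le> 4 * (L + 1) * G * min 1 (threshold k)"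
  shows "6 * m \<le> G * reps_bound k"
proof (cases "6 * real m \<le> 24 * (L + 1) * min 1 (threshold k) / a")
  case True
  have "1 * (6 * real m) \<le> G * (6 * real m)"
    using assms by (intro mult_right_mono) auto
  then show ?thesis
    using True by (simp add: reps_bound_def)
next
  case False
  have "6 * m * a \<le> 6 * (4 * (L + 1) * G * min 1 (threshold k))"
    using assms by simp
  then show ?thesis
    using False a_pos by (simp add: reps_bound_def min_def field_simps)
qed

lemma tester_sound:
  assumes "m * a < (\<Sum>i=1..m. (gap P Q i)^2)"
  shows "accept P Q tester \<le> 1/3"
proof -
  define x where "x i = (gap P Q i)^2" for i
  have "0 \<le> x i \<and> x i \<le> 1" for i
    unfolding x_def by (simp add: abs_square_le_1 abs_gap_le_1)
  then obtain k where "k \<le> L" and nonempty: "{i\<in>{1..m}. threshold k \<le> x i} \<noteq> {}"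
    and heavy: "m * a \<le> 4 * (L + 1) * card {i\<in>{1..m}. threshold k \<le> x i} * min 1 (threshold k)"
    using heavy_dyadic_level[of m a L x] m_pos a_pos L_lower assms
    unfolding threshold_def x_def by auto
  define G where "G = real (card {i\<in>{1..m}. threshold k \<le> x i})"
  have "1 \<le> G"
    using nonempty by (simp add: G_def Suc_leI card_gt_0_iff)
  have "6 * m \<le> G * reps_bound k"
    using reps_bound_heavy[OF \<open>1 \<le> G\<close>] heavy by (simp add: G_def)
  have "3/8 * G / m \<le> accept P Q (level k)"
    unfolding level_def G_def x_def
    using m_pos L_lower threshold_pos r_pos sample_size_bounds(1)
    by (intro accept_level_test_far) auto
  then have "reps_bound k * (3/8 * G / m) \<le> reps k * accept P Q (level k)"
    using reps_bounds(1) reps_bound_nonneg \<open>1 \<le> G\<close> by (intro mult_mono) auto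
  moreover have "9/4 \<le> reps_bound k * (3/8 * G / m)"
    using \<open>6 * m \<le> G * reps_bound k\<close> m_pos by (simp add: field_simps)
  ultimately have many: "9/4 \<le> reps k * accept P Q (level k)"
    by linarith
  have "accept P Q tester \<le> (1 - accept P Q (level k)) ^ reps k"
    unfolding accept_tester using \<open>k \<le> L\<close> reject_power_bounds by (intro prod_le_factor) auto
  also have "\<dots> \<le> 1 / (1 + reps k * accept P Q (level k))"
    using accept_nonneg accept_le_1 by (rule one_minus_power_le)
  also have "\<dots> \<le> 1 / (1 + 9/4)"
    using many by (intro divide_left_mono) auto
  finally show ?thesis
    by simp
qed

lemma reps_times_sample_size:
  assumes "k \<le> L"
  shows "real (reps k) * real (sample_size k) \<le> 249 * (L + 1) * r / a"
proof -
  define c where "c = 24 * (L + 1) / a"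
  have "0 \<le> c"
    using a_pos by (simp add: c_def)
  have reps_c: "reps_bound k \<le> c * min 1 (threshold k)"
    unfolding reps_bound_def c_def by (simp add: field_simps)
  then have "reps_bound k \<le> c"
    using \<open>0 \<le> c\<close> by (smt (verit) mult_left_le min.cobounded1)
  have "reps_bound k * (8 * r / threshold k) \<le> c * min 1 (threshold k) * (8 * r / threshold k)"
    using reps_c threshold_pos[of k] by (intro mult_right_mono) auto
  also have "\<dots> = c * 8 * r * (min 1 (threshold k) / threshold k)"
    by (simp add: field_simps)
  also have "\<dots> \<le> c * 8 * r * 1"
    using \<open>0 \<le> c\<close> threshold_pos[of k] by (intro mult_left_mono) (auto simp: field_simps)
  finally have prod: "reps_bound k * (8 * r / threshold k) \<le> 8 * r * c"
    by (simp add: mult_ac)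
  have "8 * r / threshold k \<le> 8 * r / (a / 4)"
    using threshold_ge[OF assms] a_pos by (intro divide_left_mono) auto
  then have inv: "8 * r / threshold k \<le> 32 * r / a"
    by simp
  have "real (reps k) * real (sample_size k) \<le> (reps_bound k + 1) * (8 * r / threshold k + 1)"
    using reps_bounds sample_size_bounds(2) reps_bound_nonneg by (intro mult_mono) auto
  also have "\<dots> = reps_bound k * (8 * r / threshold k) + reps_bound k + 8 * r / threshold k + 1"
    by (simp add: ring_distribs add_divide_distrib)
  also have "\<dots> \<le> 8 * r * c + c + 32 * r / a + 1 / a"
  proof -
    have "1 \<le> 1 / a"
      using a_pos a_lt_1 by simp
    then show ?thesis
      using prod \<open>reps_bound k \<le> c\<close> inv by linarith
  qed
  also have "\<dots> = (192 * (L + 1) * r + 24 * (L + 1) + 32 * r + 1) / a"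
    by (simp add: c_def add_divide_distrib algebra_simps)
  also have "\<dots> \<le> 249 * (L + 1) * r / a"
  proof -
    have "real L * 1 \<le> real L * real r"
      using r_pos by (intro mult_left_mono) auto
    then show ?thesis
      using r_pos a_pos by (intro divide_right_mono) (auto simp: algebra_simps)
  qed
  finally show ?thesis .
qed

lemma cost_tester: "real (cost tester) \<le> 72000 * (1 + ln m) ^ 4 / a"
proof -
  have "cost (repeat_test (reps k) (neg_test (level k))) \<le> reps k * (2 * r * sample_size k)" for k
    using cost_repeat_test[of "reps k" "neg_test (level k)"] cost_level_test[of r "sample_size k" m L]
    by (simp add: cost_neg_test level_def) (meson le_trans mult_le_mono2)
  note per = this
  have "cost tester \<le> (\<Sum>k<L + 1. reps k * (2 * r * sample_size k))"
    unfolding tester_def by (rule order.trans[OF cost_all_tests sum_mono]) (rule per)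
  then have "real (cost tester) \<le> real (\<Sum>k<L + 1. reps k * (2 * r * sample_size k))"
    by (simp only: of_nat_le_iff)
  also have "\<dots> = (\<Sum>k<L + 1. 2 * r * (real (reps k) * real (sample_size k)))"
    by (simp add: mult_ac)
  also have "\<dots> \<le> (\<Sum>k<L + 1. 2 * r * (249 * (L + 1) * r / a))"
    using reps_times_sample_size by (intro sum_mono mult_left_mono) auto
  also have "\<dots> = 498 * (real L + 1)^2 * real r ^ 2 / a"
    by (simp add: power2_eq_square field_simps)
  also have "\<dots> \<le> 498 * (3 * (1 + ln m))^2 * (4 * (1 + ln m))^2 / a"
    using levels_le_ln[OF m_pos L_upper] rounds_le_ln[OF m_pos _ r_upper] a_pos
    by (intro divide_right_mono mult_mono power_mono) auto
  also have "\<dots> = 71712 * (1 + ln m) ^ 4 / a"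
  proof -
    have "498 * (3 * y)^2 * (4 * y)^2 = 71712 * y ^ 4" for y :: real
      by algebra
    then show ?thesis
      by presburger
  qed
  also have "\<dots> \<le> 72000 * (1 + ln m) ^ 4 / a"
    using m_pos a_pos by (intro divide_right_mono mult_right_mono) auto
  finally show ?thesis .
qed

end

lemma tester_parameters_exist:
  assumes "1 \<le> m" "0 < a" "a < 1"
  shows "\<exists>L r. tester_parameters m L r a"
proof -
  obtain L where L: "2 ^ L \<le> 2 * m" "2 * m < 2 ^ (L + 1)"
    using ex_power_ivl1[of 2 "2 * m"] assms by auto
  obtain r where r: "4 ^ r \<le> 21 * m * (L + 2)" "21 * m * (L + 2) < 4 ^ (r + 1)"
    using ex_power_ivl1[of 4 "21 * m * (L + 2)"] assms by auto
  have "2 ^ (L + 1) \<le> 4 * m" "4 ^ (r + 1) \<le> 84 * m * (L + 1 + 1)"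
    using L(1) r(1) by simp_all
  then have "tester_parameters m (L + 1) (r + 1) a"
    using assms L(2) r(2) by unfold_locales (simp_all add: add.assoc)
  then show ?thesis
    by blast
qed

lemma l2sq_eq: "l2sq p q = 2 * (pmf p True - pmf q True)^2"
  unfolding l2sq_def by (simp add: UNIV_bool pmf_False_conv_True power2_eq_square algebra_simps)

lemma l2sq_le_2: "l2sq p q \<le> 2"
proof -
  have "\<bar>pmf p True - pmf q True\<bar> \<le> 1"
    using pmf_le_1[of p True] pmf_le_1[of q True] pmf_nonneg[of p True] pmf_nonneg[of q True]
    unfolding abs_le_iff by linarith
  then show ?thesis
    by (simp add: l2sq_eq abs_square_le_1)
qed

definition tests_closeness :: "nat \<Rightarrow> real \<Rightarrow> alg \<Rightarrow> bool" where
  "tests_closeness m t A \<longleftrightarrow> (\<forall>P Q.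
     ((\<forall>i\<in>{1..m}. P i = Q i) \<longrightarrow> 2/3 \<le> measure_pmf.prob (run P Q A) {True}) \<and>
     (t < (\<Sum>i=1..m. l2sq (P i) (Q i)) \<longrightarrow> 2/3 \<le> measure_pmf.prob (run P Q A) {False}))"

lemma closeness_tester:
  fixes m :: nat and a :: real
  assumes "1 \<le> m" "0 < a"
  shows "\<exists>A. real (num_samples A) \<le> 72000 * (1 + ln m) ^ 4 / a \<and> tests_closeness m (2 * m * a) A"
proof (cases "a < 1")
  case True
  then obtain L r where "tester_parameters m L r a"
    using tester_parameters_exist assms by blast
  then interpret tester_parameters m L r a .
  have "tests_closeness m (2 * m * a) (to_alg tester)"
    unfolding tests_closeness_def
  proof (intro allI conjI impI)
    fix P Q :: "nat \<Rightarrow> bool pmf"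
    show "2/3 \<le> measure_pmf.prob (run P Q (to_alg tester)) {True}" if "\<forall>i\<in>{1..m}. P i = Q i"
      using tester_complete[OF that] by (simp add: measure_pmf_single pmf_run_to_alg)
    assume "2 * m * a < (\<Sum>i=1..m. l2sq (P i) (Q i))"
    moreover have "(\<Sum>i=1..m. l2sq (P i) (Q i)) = 2 * (\<Sum>i=1..m. (gap P Q i)^2)"
      by (simp add: l2sq_eq gap_def heads_def sum_distrib_left)
    ultimately have "accept P Q tester \<le> 1/3"
      by (intro tester_sound) simp
    then show "2/3 \<le> measure_pmf.prob (run P Q (to_alg tester)) {False}"
      by (simp add: measure_pmf_single pmf_False_conv_True pmf_run_to_alg)
  qed
  then show ?thesis
    using cost_tester by (intro exI[of _ "to_alg tester"]) (simp add: cost_to_alg)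
next
  case False
  have "tests_closeness m (2 * m * a) (Done True)"
    unfolding tests_closeness_def
  proof (intro allI conjI impI)
    fix P Q :: "nat \<Rightarrow> bool pmf"
    have "(\<Sum>i=1..m. l2sq (P i) (Q i)) \<le> (\<Sum>i=1..m. 2)"
      by (intro sum_mono l2sq_le_2)
    also have "\<dots> \<le> 2 * m * a"
      using False mult_right_mono[of 1 a "2 * real m"] by (simp add: mult_ac)
    finally show "2 * m * a < (\<Sum>i=1..m. l2sq (P i) (Q i)) \<Longrightarrow> 2/3 \<le> measure_pmf.prob (run P Q (Done True)) {False}"
      by simp
  qed simp
  moreover have "0 \<le> 72000 * (1 + ln (real m)) ^ 4 / a"
    using assms by simp
  ultimately show ?thesis
    by (intro exI[of _ "Done True"]) simp
qed

theorem mainTheorem2: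
  "\<exists>C::real. C > 0 \<and>
    (\<forall>(m::nat) (\<epsilon>::real). m \<ge> 1 \<longrightarrow> \<epsilon> > 0 \<longrightarrow>
      (\<exists>A::alg.
         real (num_samples A) \<le> C * (1 + ln (real m)) ^ 4 / \<epsilon>^2 \<and>
         (\<forall>P Q :: nat \<Rightarrow> bool pmf.
            ((\<forall>i\<in>{1..m}. P i = Q i) \<longrightarrow> measure_pmf.prob (run P Q A) {True} \<ge> 2/3) \<and>
            ((1 / real m) * (\<Sum>i=1..m. l2sq (P i) (Q i)) > \<epsilon>^2 \<longrightarrow>
               measure_pmf.prob (run P Q A) {False} \<ge> 2/3))))"
proof (intro exI[of _ 144000] conjI allI impI)
  fix m :: nat and \<epsilon> :: real
  assume "m \<ge> 1" "\<epsilon> > 0"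
  then obtain A where cost: "real (num_samples A) \<le> 72000 * (1 + ln m) ^ 4 / (\<epsilon>^2 / 2)"
    and tests: "tests_closeness m (2 * m * (\<epsilon>^2 / 2)) A"
    using closeness_tester[of m "\<epsilon>^2 / 2"] by auto
  have far: "2 * m * (\<epsilon>^2 / 2) < (\<Sum>i=1..m. l2sq (P i) (Q i))"
    if "(1 / real m) * (\<Sum>i=1..m. l2sq (P i) (Q i)) > \<epsilon>^2" for P Q :: "nat \<Rightarrow> bool pmf"
    using that \<open>m \<ge> 1\<close> by (simp add: field_simps)
  show "\<exists>A. real (num_samples A) \<le> 144000 * (1 + ln (real m)) ^ 4 / \<epsilon>^2 \<and>
         (\<forall>P Q :: nat \<Rightarrow> bool pmf.
            ((\<forall>i\<in>{1..m}. P i = Q i) \<longrightarrow> measure_pmf.prob (run P Q A) {True} \<ge> 2/3) \<and>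
            ((1 / real m) * (\<Sum>i=1..m. l2sq (P i) (Q i)) > \<epsilon>^2 \<longrightarrow>
               measure_pmf.prob (run P Q A) {False} \<ge> 2/3))"
    using cost tests far unfolding tests_closeness_def by (intro exI[of _ A]) auto
qed simp

end
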